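(* Let $N\ge1$, $\lambda_1,\dots,\lambda_N$ distinct, $\mu_1,\dots,\mu_N$ nonzero constants, $B=\mathrm{diag}(\mu_j)$. If $P_i,Q_i$ ($i=1,2,3$) solve the nonlinearized spatial system (defined below), then there exist $N$ integrals of motion $\alpha_0,\dots,\alpha_{N-1}$ of that system such that \[q=\sqrt2(\langle P_1,BQ_2\rangle+\langle P_2,BQ_3\rangle),\qquad r=\sqrt2(\langle P_2,BQ_1\rangle+\langle P_3,BQ_2\rangle)\] solve the $N$-th order stationary AKNS equation \[K_N+\sum_{i=0}^{N-1}\alpha_iK_i=0.\]
   Context: Potential $u=(q,r)^T$; $U(u,\lambda)=\begin{pmatrix}-2\lambda&\sqrt2 q&0\\ \sqrt2 r&0&\sqrt2 q\\ 0&\sqrt2 r&2\lambda\end{pmatrix}$. Differential polynomials $a_i,b_i,c_i$ in $q,r$ and their $x$-derivatives: $a_0=-1$, $b_0=c_0=0$, and for $i\ge0$, $a_{i+1}=\frac12\partial^{-1}(q c_{i,x}+r b_{i,x})$, $b_{i+1}=-\frac12 b_{i,x}-q a_i$, $c_{i+1}=\frac12 c_{i,x}-r a_i$ ($\partial=d/dx$), with constants of integration fixed by $a_i|_{u=0}=b_i|_{u=0}=c_i|_{u=0}=0$ for $i\ge1$. The AKNS vector fields are $K_n=(-2b_{n+1},\,2c_{n+1})^T$, $n\ge0$. Phase space $\mathbb{R}^{6N}$ with coordinates $\phi_{ij},\psi_{ij}$ ($i=1,2,3$, $j=1,\dots,N$), $P_i=(\phi_{i1},\dots,\phi_{iN})^T$,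 $Q_i=(\psi_{i1},\dots,\psi_{iN})^T$, $\langle\cdot,\cdot\rangle$ the standard inner product on $\mathbb{R}^N$. With $\tilde u=(\tilde q,\tilde r)^T$, $\tilde q=\sqrt2(\langle P_1,BQ_2\rangle+\langle P_2,BQ_3\rangle)$, $\tilde r=\sqrt2(\langle P_2,BQ_1\rangle+\langle P_3,BQ_2\rangle)$, the nonlinearized spatial system is $(\phi_{1j},\phi_{2j},\phi_{3j})^T_x=U(\tilde u,\lambda_j)(\phi_{1j},\phi_{2j},\phi_{3j})^T$, $(\psi_{1j},\psi_{2j},\psi_{3j})^T_x=-U(\tilde u,\lambda_j)^T(\psi_{1j},\psi_{2j},\psi_{3j})^T$, $j=1,\dots,N$. An integral of motion is a function of $P_i,Q_i$ constant along solutions of this system. *)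

theory Defs
  imports "HOL-Analysis.Analysis"
begin

text \<open>A differential polynomial in q, r is represented by an expression over the
jet variables q^(k) (DQ k) and r^(k) (DR k). It is evaluated on jets
(qj k = k-th derivative of q, rj k = k-th derivative of r).\<close>

datatype dpoly = DConst real | DQ nat | DR nat | DAdd dpoly dpoly | DMul dpoly dpoly

fun deval :: "dpoly \<Rightarrow> (nat \<Rightarrow> real) \<Rightarrow> (nat \<Rightarrow> real) \<Rightarrow> real" where
  "deval (DConst c) qj rj = c"
| "deval (DQ k) qj rj = qj k"
| "deval (DR k) qj rj = rj k"
| "deval (DAdd e1 e2) qj rj = deval e1 qj rj + deval e2 qj rj"
| "deval (DMul e1 e2) qj rj = deval e1 qj rj * deval e2 qj rj"

fun dD :: "dpoly \<Rightarrow> dpoly" where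
  "dD (DConst c) = DConst 0"
| "dD (DQ k) = DQ (Suc k)"
| "dD (DR k) = DR (Suc k)"
| "dD (DAdd e1 e2) = DAdd (dD e1) (dD e2)"
| "dD (DMul e1 e2) = DAdd (DMul (dD e1) e2) (DMul e1 (dD e2))"

text \<open>The antiderivative a_{i+1} is a differential
polynomial whose total derivative is (q c_{i,x} + r b_{i,x})/2 and which vanishes at u = 0
(this determines it uniquely as a function on jets).\<close>
fun abc :: "nat \<Rightarrow> dpoly \<times> dpoly \<times> dpoly" where
  "abc 0 = (DConst (-1), DConst 0, DConst 0)"
| "abc (Suc i) =
    (let (a, b, c) = abc i;
         integrand = DMul (DConst (1/2)) (DAdd (DMul (DQ 0) (dD c)) (DMul (DR 0) (dD b)));
         a' = (SOME e. (\<forall>qj rj. deval (dD e) qj rj = deval integrand qj rj)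
                        \<and> deval e (\<lambda>_. 0) (\<lambda>_. 0) = 0);
         b' = DAdd (DMul (DConst (-1/2)) (dD b)) (DMul (DConst (-1)) (DMul (DQ 0) a));
         c' = DAdd (DMul (DConst (1/2)) (dD c)) (DMul (DConst (-1)) (DMul (DR 0) a))
     in (a', b', c'))"

definition a_dp :: "nat \<Rightarrow> dpoly" where "a_dp i = fst (abc i)"
definition b_dp :: "nat \<Rightarrow> dpoly" where "b_dp i = fst (snd (abc i))"
definition c_dp :: "nat \<Rightarrow> dpoly" where "c_dp i = snd (snd (abc i))"

text \<open>The AKNS vector field K_n = (-2 b_{n+1}, 2 c_{n+1}), evaluated on jets.\<close>
definition K1 :: "nat \<Rightarrow> (nat \<Rightarrow> real) \<Rightarrow> (nat \<Rightarrow> real) \<Rightarrow> real" where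
  "K1 n qj rj = -2 * deval (b_dp (Suc n)) qj rj"
definition K2 :: "nat \<Rightarrow> (nat \<Rightarrow> real) \<Rightarrow> (nat \<Rightarrow> real) \<Rightarrow> real" where
  "K2 n qj rj = 2 * deval (c_dp (Suc n)) qj rj"

definition jet :: "(real \<Rightarrow> real) \<Rightarrow> real \<Rightarrow> nat \<Rightarrow> real" where
  "jet f x = (\<lambda>k. (deriv ^^ k) f x)"

text \<open>U(u,lambda), indices 1..3.\<close>
definition Umat :: "real \<Rightarrow> real \<Rightarrow> real \<Rightarrow> nat \<Rightarrow> nat \<Rightarrow> real" where
  "Umat q r lam i k =
     (if i = 1 \<and> k = 1 then -2 * lam
      else if i = 1 \<and> k = 2 then sqrt 2 * q
      else if i = 2 \<and> k = 1 then sqrt 2 * r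
      else if i = 2 \<and> k = 3 then sqrt 2 * q
      else if i = 3 \<and> k = 2 then sqrt 2 * r
      else if i = 3 \<and> k = 3 then 2 * lam
      else 0)"

text \<open>A phase-space point: phi i j = phi_{ij}, psi i j = psi_{ij} (i = 1..3, j = 1..N);
B = diag(mu_1, ..., mu_N).\<close>
type_synonym state = "nat \<Rightarrow> nat \<Rightarrow> real"

definition qt :: "nat \<Rightarrow> (nat \<Rightarrow> real) \<Rightarrow> state \<Rightarrow> state \<Rightarrow> real" where
  "qt N mu phi psi = sqrt 2 * ((\<Sum>j=1..N. phi 1 j * (mu j * psi 2 j))
                             + (\<Sum>j=1..N. phi 2 j * (mu j * psi 3 j)))"

definition rt :: "nat \<Rightarrow> (nat \<Rightarrow> real) \<Rightarrow> state \<Rightarrow> state \<Rightarrow> real" where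
  "rt N mu phi psi = sqrt 2 * ((\<Sum>j=1..N. phi 2 j * (mu j * psi 1 j))
                             + (\<Sum>j=1..N. phi 3 j * (mu j * psi 2 j)))"

definition solves :: "nat \<Rightarrow> (nat \<Rightarrow> real) \<Rightarrow> (nat \<Rightarrow> real) \<Rightarrow> real set
                      \<Rightarrow> (real \<Rightarrow> state) \<Rightarrow> (real \<Rightarrow> state) \<Rightarrow> bool" where
  "solves N lam mu I phi psi \<longleftrightarrow>
     (\<forall>x\<in>I. \<forall>i\<in>{1..3}. \<forall>j\<in>{1..N}.
        ((\<lambda>t. phi t i j) has_real_derivative
           (\<Sum>k=1..3. Umat (qt N mu (phi x) (psi x)) (rt N mu (phi x) (psi x)) (lam j) i k
                        * phi x k j)) (at x)
      \<and> ((\<lambda>t. psi t i j) has_real_derivative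
           - (\<Sum>k=1..3. Umat (qt N mu (phi x) (psi x)) (rt N mu (phi x) (psi x)) (lam j) k i
                        * psi x k j)) (at x))"

definition integral_of_motion :: "nat \<Rightarrow> (nat \<Rightarrow> real) \<Rightarrow> (nat \<Rightarrow> real)
                                   \<Rightarrow> (state \<Rightarrow> state \<Rightarrow> real) \<Rightarrow> bool" where
  "integral_of_motion N lam mu F \<longleftrightarrow>
     (\<forall>I phi psi. open I \<and> is_interval I \<and> solves N lam mu I phi psi \<longrightarrow>
        (\<forall>x\<in>I. \<forall>y\<in>I. F (phi x) (psi x) = F (phi y) (psi y)))"

end

theory Submission
  imports Defs "HOL-Computational_Algebra.Polynomial"
begin

(* Along a solution of the nonlinearized system, the Lax entries
     A(lambda) = -1 + sum_j mu_j (phi_1j psi_1j - phi_3j psi_3j) / (lambda - lambda_j),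
     B(lambda) = sqrt 2 sum_j mu_j (phi_1j psi_2j + phi_2j psi_3j) / (lambda - lambda_j),
     C(lambda) = sqrt 2 sum_j mu_j (phi_2j psi_1j + phi_3j psi_2j) / (lambda - lambda_j),
   expanded in powers of 1/lambda, satisfy the same stationary zero-curvature recursion as the AKNS
   coefficients (a_m, b_m, c_m) evaluated on q, r.  Two solutions of this recursion differ by a factor
   Gamma(lambda) = sum_k Gamma_k lambda^-k with x-independent coefficients: A = Gamma a, B = Gamma b,
   C = Gamma c.  The Gamma_k are polynomials in the phase-space variables (the jets of q, r are), hence
   integrals of motion.  Finally the characteristic polynomial p(lambda) = prod_j (lambda - lambda_j)
   kills the power sums sum_j w_j lambda_j^m, so sum_m p_m B_(m+1) = 0 = sum_m p_m C_(m+1); regrouping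
   these convolutions gives the stationary equation with alpha_n = sum_k p_(n+k) Gamma_k. *)

section \<open>The AKNS recursion\<close>

lemma abc_dp_0: "a_dp 0 = DConst (-1)" "b_dp 0 = DConst 0" "c_dp 0 = DConst 0"
  by (simp_all add: a_dp_def b_dp_def c_dp_def)

lemma b_dp_Suc:
    "b_dp (Suc i) = DAdd (DMul (DConst (-1/2)) (dD (b_dp i))) (DMul (DConst (-1)) (DMul (DQ 0) (a_dp i)))"
  and c_dp_Suc:
    "c_dp (Suc i) = DAdd (DMul (DConst (1/2)) (dD (c_dp i))) (DMul (DConst (-1)) (DMul (DR 0) (a_dp i)))"
  by (simp_all add: b_dp_def c_dp_def a_dp_def split_def Let_def)

lemma a_dp_Suc_someI:
  assumes "\<And>qj rj. deval (dD e) qj rj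
      = (qj 0 * deval (dD (c_dp i)) qj rj + rj 0 * deval (dD (b_dp i)) qj rj) / 2"
    and "deval e (\<lambda>_. 0) (\<lambda>_. 0) = 0"
  shows "deval (dD (a_dp (Suc i))) qj rj
      = (qj 0 * deval (dD (c_dp i)) qj rj + rj 0 * deval (dD (b_dp i)) qj rj) / 2"
    and "deval (a_dp (Suc i)) (\<lambda>_. 0) (\<lambda>_. 0) = 0"
proof -
  let ?P = "\<lambda>e. (\<forall>qj rj. deval (dD e) qj rj
      = deval (DMul (DConst (1/2)) (DAdd (DMul (DQ 0) (dD (c_dp i))) (DMul (DR 0) (dD (b_dp i))))) qj rj)
    \<and> deval e (\<lambda>_. 0) (\<lambda>_. 0) = 0"
  have a_dp_Suc: "a_dp (Suc i) = (SOME e. ?P e)"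
    by (simp add: a_dp_def b_dp_def c_dp_def split_def Let_def)
  have "?P (a_dp (Suc i))"
    unfolding a_dp_Suc by (rule someI[of ?P e]) (use assms in simp)
  then show "deval (dD (a_dp (Suc i))) qj rj
      = (qj 0 * deval (dD (c_dp i)) qj rj + rj 0 * deval (dD (b_dp i)) qj rj) / 2"
    and "deval (a_dp (Suc i)) (\<lambda>_. 0) (\<lambda>_. 0) = 0"
    by simp_all
qed

lemma deval_dD_at_zero: "deval (dD e) (\<lambda>_. 0) (\<lambda>_. 0) = 0"
  by (induct e) auto

lemma b_dp_c_dp_at_zero: "deval (b_dp k) (\<lambda>_. 0) (\<lambda>_. 0) = 0 \<and> deval (c_dp k) (\<lambda>_. 0) (\<lambda>_. 0) = 0"
  by (induct k) (auto simp: b_dp_Suc c_dp_Suc abc_dp_0 deval_dD_at_zero)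

fun dpoly_sum :: "(nat \<Rightarrow> dpoly) \<Rightarrow> nat list \<Rightarrow> dpoly" where
  "dpoly_sum f [] = DConst 0"
| "dpoly_sum f (k # ks) = DAdd (f k) (dpoly_sum f ks)"

lemma deval_dpoly_sum: "deval (dpoly_sum f ks) qj rj = (\<Sum>k\<leftarrow>ks. deval (f k) qj rj)"
  by (induct ks) auto

lemma deval_dD_dpoly_sum: "deval (dD (dpoly_sum f ks)) qj rj = (\<Sum>k\<leftarrow>ks. deval (dD (f k)) qj rj)"
  by (induct ks) auto

lemma sum_atMost_Suc_ends:
  "(\<Sum>k\<le>Suc m. f k) = f 0 + (\<Sum>k=1..m. f k) + (f (Suc m) :: 'a :: comm_monoid_add)"
  by (simp add: atMost_atLeast0 sum.atLeast_Suc_atMost ac_simps)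

text \<open>The coefficient of \<open>\<lambda>\<^sup>-\<^sup>n\<close> of the conserved quantity \<open>a\<^sup>2 + b c = 1\<close> makes
  \<open>(\<Sum>k=1..n-1. a\<^sub>k a\<^sub>n\<^sub>-\<^sub>k + \<Sum>k=0..n. b\<^sub>k c\<^sub>n\<^sub>-\<^sub>k) / 2\<close> an antiderivative of
  \<open>q c\<^sub>n - r b\<^sub>n\<close>, a valid choice for \<open>a\<^sub>n\<close>.\<close>

lemma quadratic_antiderivative_identity:
  fixes a b c a' b' c' :: "nat \<Rightarrow> real"
  assumes a0: "a 0 = -1" and b0: "b 0 = 0" and c0: "c 0 = 0"
    and b': "\<And>k. b' k = -2 * b (Suc k) - 2 * q * a k"
    and c': "\<And>k. c' k = 2 * c (Suc k) + 2 * r * a k"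
    and a': "\<And>k. k \<in> {1..m} \<Longrightarrow> a' k = q * c k - r * b k"
  shows "(\<Sum>k=1..m. a' k * a (Suc m - k) + a k * a' (Suc m - k))
       + (\<Sum>k\<le>Suc m. b' k * c (Suc m - k) + b k * c' (Suc m - k))
       = 2 * (q * c (Suc m) - r * b (Suc m))"
proof -
  define n where "n = Suc m"
  have reflect: "(\<Sum>k=1..m. f k * g (n - k)) = (\<Sum>k=1..m. g k * f (n - k))" for f g :: "nat \<Rightarrow> real"
    by (subst sum.atLeastAtMost_rev) (auto simp: n_def mult.commute intro!: sum.cong)
  have telescope: "(\<Sum>k\<le>n. b (Suc k) * c (n - k) - b k * c (Suc n - k)) = 0"
    using sum_Suc_diff[of 0 n "\<lambda>k. b k * c (Suc n - k)"] by (simp add: atMost_atLeast0 b0 c0)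
  have "(\<Sum>k\<le>n. b' k * c (n - k) + b k * c' (n - k))
      = (\<Sum>k\<le>n. -2 * (b (Suc k) * c (n - k) - b k * c (Suc n - k))
          - 2 * q * (a k * c (n - k)) + 2 * r * (b k * a (n - k)))"
    by (intro sum.cong) (auto simp: b' c' Suc_diff_le algebra_simps)
  also have "\<dots> = -2 * (\<Sum>k\<le>n. b (Suc k) * c (n - k) - b k * c (Suc n - k))
      - 2 * q * (\<Sum>k\<le>n. a k * c (n - k)) + 2 * r * (\<Sum>k\<le>n. b k * a (n - k))"
    by (simp add: sum.distrib sum_subtractf sum_distrib_left)
  also have "\<dots> = 2 * (q * c n) - 2 * (r * b n)
      - 2 * (q * (\<Sum>k=1..m. a k * c (n - k))) + 2 * (r * (\<Sum>k=1..m. b k * a (n - k)))"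
    unfolding telescope unfolding n_def sum_atMost_Suc_ends by (simp add: a0 b0 c0 algebra_simps)
  finally have bc: "(\<Sum>k\<le>n. b' k * c (n - k) + b k * c' (n - k))
      = 2 * (q * c n) - 2 * (r * b n)
        - 2 * (q * (\<Sum>k=1..m. a k * c (n - k))) + 2 * (r * (\<Sum>k=1..m. b k * a (n - k)))" .
  have "(\<Sum>k=1..m. a' k * a (n - k) + a k * a' (n - k)) = 2 * (\<Sum>k=1..m. a' k * a (n - k))"
    by (simp only: sum.distrib reflect[of a a'])
  also have "\<dots> = 2 * (\<Sum>k=1..m. q * (c k * a (n - k)) - r * (b k * a (n - k)))"
    by (intro arg_cong[where f = "(*) 2"] sum.cong) (simp_all add: a' algebra_simps)
  also have "\<dots> = 2 * (q * (\<Sum>k=1..m. c k * a (n - k)) - r * (\<Sum>k=1..m. b k * a (n - k)))"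
    by (simp only: sum_subtractf sum_distrib_left)
  also have "\<dots> = 2 * (q * (\<Sum>k=1..m. a k * c (n - k))) - 2 * (r * (\<Sum>k=1..m. b k * a (n - k)))"
    unfolding reflect[of c a] by (simp only: right_diff_distrib)
  finally have aa: "(\<Sum>k=1..m. a' k * a (n - k) + a k * a' (n - k))
      = 2 * (q * (\<Sum>k=1..m. a k * c (n - k))) - 2 * (r * (\<Sum>k=1..m. b k * a (n - k)))" .
  show ?thesis
    using aa bc unfolding n_def by argo
qed

lemma a_dp_deriv_and_at_zero:
  "(\<forall>qj rj. deval (dD (a_dp n)) qj rj = qj 0 * deval (c_dp n) qj rj - rj 0 * deval (b_dp n) qj rj)
   \<and> (n \<ge> 1 \<longrightarrow> deval (a_dp n) (\<lambda>_. 0) (\<lambda>_. 0) = 0)"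
proof (induction n rule: less_induct)
  case (less n)
  show ?case
  proof (cases n)
    case 0
    then show ?thesis by (simp add: abc_dp_0)
  next
    case (Suc i)
    define e where "e = DMul (DConst (1/2))
      (DAdd (dpoly_sum (\<lambda>k. DMul (a_dp k) (a_dp (n - k))) [1..<n])
            (dpoly_sum (\<lambda>k. DMul (b_dp k) (c_dp (n - k))) [0..<Suc n]))"
    have e_deriv: "deval (dD e) qj rj
        = (qj 0 * deval (dD (c_dp i)) qj rj + rj 0 * deval (dD (b_dp i)) qj rj) / 2" for qj rj
    proof -
      let ?a = "\<lambda>k. deval (a_dp k) qj rj" and ?a' = "\<lambda>k. deval (dD (a_dp k)) qj rj"
        and ?b = "\<lambda>k. deval (b_dp k) qj rj" and ?b' = "\<lambda>k. deval (dD (b_dp k)) qj rj"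
        and ?c = "\<lambda>k. deval (c_dp k) qj rj" and ?c' = "\<lambda>k. deval (dD (c_dp k)) qj rj"
      let ?S = "(\<Sum>k=1..i. ?a' k * ?a (Suc i - k) + ?a k * ?a' (Suc i - k))
        + (\<Sum>k\<le>Suc i. ?b' k * ?c (Suc i - k) + ?b k * ?c' (Suc i - k))"
      have "?S = 2 * (qj 0 * ?c (Suc i) - rj 0 * ?b (Suc i))"
        using less.IH Suc
        by (intro quadratic_antiderivative_identity) (auto simp: abc_dp_0 b_dp_Suc c_dp_Suc)
      moreover have "deval (dD e) qj rj = 1/2 * ?S"
        by (simp only: e_def Suc dD.simps deval.simps deval_dD_dpoly_sum mult_zero_left add_0_left
            set_upt atLeastLessThanSuc_atLeastAtMost atMost_atLeast0 flip: sum_set_upt_conv_sum_list_nat)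
      ultimately show ?thesis
        by (simp add: b_dp_Suc c_dp_Suc algebra_simps)
    qed
    have "deval e (\<lambda>_. 0) (\<lambda>_. 0) = 0"
      using less.IH b_dp_c_dp_at_zero
      by (simp add: e_def deval_dpoly_sum flip: sum_set_upt_conv_sum_list_nat)
    note a_Suc = a_dp_Suc_someI[OF e_deriv this]
    have "deval (dD (a_dp n)) qj rj = qj 0 * deval (c_dp n) qj rj - rj 0 * deval (b_dp n) qj rj"
      for qj rj
      using a_Suc(1)[of qj rj] by (simp add: Suc b_dp_Suc c_dp_Suc algebra_simps)
    with a_Suc(2) Suc show ?thesis
      by simp
  qed
qed

section \<open>The stationary zero-curvature recursion\<close>

text \<open>The coefficients of \<open>\<lambda>\<^sup>-\<^sup>m\<close> in \<open>a\<^sub>x = q c - r b\<close>, \<open>b\<^sub>x = -2\<lambda> b - 2 q a\<close>,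
  \<open>c\<^sub>x = 2\<lambda> c + 2 r a\<close> for \<open>a = \<Sum>m. a\<^sub>m \<lambda>\<^sup>-\<^sup>m\<close> etc., normalised by \<open>a\<^sub>0 = -1\<close>.\<close>
definition zero_curvature_seq ::
  "real set \<Rightarrow> (real \<Rightarrow> real) \<Rightarrow> (real \<Rightarrow> real)
    \<Rightarrow> (nat \<Rightarrow> real \<Rightarrow> real) \<Rightarrow> (nat \<Rightarrow> real \<Rightarrow> real) \<Rightarrow> (nat \<Rightarrow> real \<Rightarrow> real) \<Rightarrow> bool" where
  "zero_curvature_seq I q r a b c \<longleftrightarrow>
     (\<forall>t\<in>I. a 0 t = -1 \<and> b 0 t = 0 \<and> c 0 t = 0) \<and>
     (\<forall>m. \<forall>t\<in>I.
        (a m has_real_derivative q t * c m t - r t * b m t) (at t) \<and>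
        (b m has_real_derivative -2 * b (Suc m) t - 2 * q t * a m t) (at t) \<and>
        (c m has_real_derivative 2 * c (Suc m) t + 2 * r t * a m t) (at t))"

text \<open>The coefficients of the power series \<open>A / a\<close> in \<open>\<lambda>\<^sup>-\<^sup>1\<close>, using \<open>a\<^sub>0 = A\<^sub>0 = -1\<close>.\<close>
fun quot_coeff :: "(nat \<Rightarrow> real) \<Rightarrow> (nat \<Rightarrow> real) \<Rightarrow> nat \<Rightarrow> real" where
  "quot_coeff a A 0 = 1"
| "quot_coeff a A (Suc m) = (\<Sum>k\<le>m. quot_coeff a A k * a (Suc m - k)) - A (Suc m)"

lemma quot_coeff_convolution:
  assumes "a 0 = -1" and "A 0 = -1"
  shows "A m = (\<Sum>k\<le>m. quot_coeff a A k * a (m - k))"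
  by (cases m) (simp_all add: assms)

lemma convolution_Suc_of_derivatives:
  fixes G v V a :: "nat \<Rightarrow> real \<Rightarrow> real"
  assumes I: "open I" "x \<in> I" and "s \<noteq> 0"
    and G: "\<And>k. k \<le> i \<Longrightarrow> (G k has_real_derivative 0) (at x)"
    and v: "\<And>m. (v m has_real_derivative s * (v (Suc m) x + w * a m x)) (at x)"
    and V: "(V i has_real_derivative s * (V (Suc i) x + w * A x)) (at x)"
    and conv_V: "\<And>t. t \<in> I \<Longrightarrow> V i t = (\<Sum>k\<le>i. G k t * v (i - k) t)"
    and conv_A: "A x = (\<Sum>k\<le>i. G k x * a (i - k) x)"
    and "v 0 x = 0"
  shows "V (Suc i) x = (\<Sum>k\<le>Suc i. G k x * v (Suc i - k) x)"
proof -
  have "((\<lambda>t. \<Sum>k\<le>i. G k t * v (i - k) t) has_real_derivative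
      (\<Sum>k\<le>i. G k x * (s * (v (Suc i - k) x + w * a (i - k) x)))) (at x)"
    by (rule DERIV_cong[OF DERIV_sum[OF DERIV_mult[OF G v]]]) (auto intro!: sum.cong simp: Suc_diff_le)
  then have "(V i has_real_derivative
      (\<Sum>k\<le>i. G k x * (s * (v (Suc i - k) x + w * a (i - k) x)))) (at x)"
    by (rule has_field_derivative_transform_within_open[OF _ I]) (simp add: conv_V)
  then have "s * (V (Suc i) x + w * A x) = s * ((\<Sum>k\<le>i. G k x * v (Suc i - k) x) + w * A x)"
    using DERIV_unique[OF V]
    by (simp add: conv_A sum.distrib sum_distrib_left algebra_simps)
  with \<open>s \<noteq> 0\<close> \<open>v 0 x = 0\<close> show ?thesis
    by simp
qed

lemma quot_coeff_Suc_conserved: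
  fixes G a b c :: "nat \<Rightarrow> real \<Rightarrow> real"
  assumes G_Suc: "\<And>t. G (Suc i) t = (\<Sum>k\<le>i. G k t * a (Suc i - k) t) - A t"
    and G: "\<And>k. k \<le> i \<Longrightarrow> (G k has_real_derivative 0) (at x)"
    and a: "\<And>m. (a m has_real_derivative q * c m x - r * b m x) (at x)"
    and A: "(A has_real_derivative q * C x - r * B x) (at x)"
    and conv_B: "B x = (\<Sum>k\<le>Suc i. G k x * b (Suc i - k) x)"
    and conv_C: "C x = (\<Sum>k\<le>Suc i. G k x * c (Suc i - k) x)"
    and "b 0 x = 0" "c 0 x = 0"
  shows "(G (Suc i) has_real_derivative 0) (at x)"
proof -
  have "((\<lambda>t. (\<Sum>k\<le>i. G k t * a (Suc i - k) t) - A t) has_real_derivative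
      (\<Sum>k\<le>i. G k x * (q * c (Suc i - k) x - r * b (Suc i - k) x)) - (q * C x - r * B x)) (at x)"
    by (rule DERIV_cong[OF DERIV_diff[OF DERIV_sum[OF DERIV_mult[OF G a]] A]]) (auto simp: mult.commute)
  moreover have "(\<Sum>k\<le>i. G k x * (q * c (Suc i - k) x - r * b (Suc i - k) x)) - (q * C x - r * B x) = 0"
    using \<open>b 0 x = 0\<close> \<open>c 0 x = 0\<close>
    by (simp add: conv_B conv_C sum_distrib_left sum_subtractf algebra_simps)
  ultimately show ?thesis
    by (simp add: G_Suc [abs_def])
qed

lemma zero_curvature_seqD:
  assumes "zero_curvature_seq I q r a b c" and "t \<in> I"
  shows "a 0 t = -1" "b 0 t = 0" "c 0 t = 0"
    and "(a m has_real_derivative q t * c m t - r t * b m t) (at t)"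
    and "(b m has_real_derivative -2 * (b (Suc m) t + q t * a m t)) (at t)"
    and "(c m has_real_derivative 2 * (c (Suc m) t + r t * a m t)) (at t)"
proof -
  note seq = assms(1)[unfolded zero_curvature_seq_def, THEN conjunct2, rule_format, OF assms(2)]
  show "a 0 t = -1" "b 0 t = 0" "c 0 t = 0"
    using assms by (simp_all add: zero_curvature_seq_def)
  show "(a m has_real_derivative q t * c m t - r t * b m t) (at t)"
    using seq by blast
  show "(b m has_real_derivative -2 * (b (Suc m) t + q t * a m t)) (at t)"
    using seq[of m] by (auto elim: DERIV_cong simp: algebra_simps)
  show "(c m has_real_derivative 2 * (c (Suc m) t + r t * a m t)) (at t)"
    using seq[of m] by (auto elim: DERIV_cong simp: algebra_simps)
qed

lemma zero_curvature_seq_quotient: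
  assumes I: "open I"
    and abc: "zero_curvature_seq I q r a b c" and ABC: "zero_curvature_seq I q r A B C"
    and x: "x \<in> I"
  defines "G k t \<equiv> quot_coeff (\<lambda>m. a m t) (\<lambda>m. A m t) k"
  shows "((\<lambda>t. G k t) has_real_derivative 0) (at x)"
    and "B m x = (\<Sum>k\<le>m. G k x * b (m - k) x)"
    and "C m x = (\<Sum>k\<le>m. G k x * c (m - k) x)"
proof -
  note abc' = zero_curvature_seqD[OF abc] and ABC' = zero_curvature_seqD[OF ABC]
  let ?P = "\<lambda>k. \<forall>x\<in>I. ((\<lambda>t. G k t) has_real_derivative 0) (at x)
    \<and> B k x = (\<Sum>j\<le>k. G j x * b (k - j) x) \<and> C k x = (\<Sum>j\<le>k. G j x * c (k - j) x)"
  have "\<forall>k\<le>i. ?P k" for i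
  proof (induction i)
    case 0
    show ?case
      by (simp add: G_def abc' ABC')
  next
    case (Suc i)
    then have G: "\<And>k x. k \<le> i \<Longrightarrow> x \<in> I \<Longrightarrow> ((\<lambda>t. G k t) has_real_derivative 0) (at x)"
      by blast
    have conv_A: "A i x = (\<Sum>k\<le>i. G k x * a (i - k) x)" if "x \<in> I" for x
      unfolding G_def using that by (intro quot_coeff_convolution abc'(1) ABC'(1))
    have B: "B (Suc i) x = (\<Sum>k\<le>Suc i. G k x * b (Suc i - k) x)" if x: "x \<in> I" for x
      by (rule convolution_Suc_of_derivatives[where v = b and V = B and a = a and A = "A i",
          OF I x _ _ abc'(5)[OF x] ABC'(5)[OF x]])
         (use G x Suc.IH conv_A abc'(2) in auto)
    have C: "C (Suc i) x = (\<Sum>k\<le>Suc i. G k x * c (Suc i - k) x)" if x: "x \<in> I" for x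
      by (rule convolution_Suc_of_derivatives[where v = c and V = C and a = a and A = "A i",
          OF I x _ _ abc'(6)[OF x] ABC'(6)[OF x]])
         (use G x Suc.IH conv_A abc'(3) in auto)
    have "((\<lambda>t. G (Suc i) t) has_real_derivative 0) (at x)" if x: "x \<in> I" for x
    proof (rule quot_coeff_Suc_conserved[where a = a and b = b and c = c and A = "A (Suc i)"
        and B = "B (Suc i)" and C = "C (Suc i)", OF _ _ abc'(4)[OF x] ABC'(4)[OF x]])
      show "G (Suc i) t = (\<Sum>k\<le>i. G k t * a (Suc i - k) t) - A (Suc i) t" for t
        by (simp add: G_def)
    qed (use G x B C abc' in auto)
    with Suc.IH B C show ?case
      by (auto simp: le_Suc_eq)
  qed
  with x show "((\<lambda>t. G k t) has_real_derivative 0) (at x)"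
    and "B m x = (\<Sum>k\<le>m. G k x * b (m - k) x)"
    and "C m x = (\<Sum>k\<le>m. G k x * c (m - k) x)"
    by blast+
qed

section \<open>Polynomial functions on phase space\<close>

datatype pexpr = PConst real | Phi nat nat | Psi nat nat | PAdd pexpr pexpr | PMul pexpr pexpr

fun peval :: "pexpr \<Rightarrow> state \<Rightarrow> state \<Rightarrow> real" where
  "peval (PConst c) p s = c"
| "peval (Phi i j) p s = p i j"
| "peval (Psi i j) p s = s i j"
| "peval (PAdd e1 e2) p s = peval e1 p s + peval e2 p s"
| "peval (PMul e1 e2) p s = peval e1 p s * peval e2 p s"

fun pvars_in :: "nat \<Rightarrow> pexpr \<Rightarrow> bool" where
  "pvars_in N (PConst c) = True"
| "pvars_in N (Phi i j) = (i \<in> {1..3} \<and> j \<in> {1..N})"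
| "pvars_in N (Psi i j) = (i \<in> {1..3} \<and> j \<in> {1..N})"
| "pvars_in N (PAdd e1 e2) = (pvars_in N e1 \<and> pvars_in N e2)"
| "pvars_in N (PMul e1 e2) = (pvars_in N e1 \<and> pvars_in N e2)"

fun psum :: "(nat \<Rightarrow> pexpr) \<Rightarrow> nat \<Rightarrow> pexpr" where
  "psum f 0 = PConst 0"
| "psum f (Suc n) = PAdd (psum f n) (f (Suc n))"

lemma peval_psum [simp]: "peval (psum f n) p s = (\<Sum>j=1..n. peval (f j) p s)"
  by (induct n) auto

lemma pvars_in_psum: "(\<And>j. j \<in> {1..n} \<Longrightarrow> pvars_in N (f j)) \<Longrightarrow> pvars_in N (psum f n)"
  by (induct n) auto

definition q_pexpr :: "nat \<Rightarrow> (nat \<Rightarrow> real) \<Rightarrow> pexpr" where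
  "q_pexpr N mu = PMul (PConst (sqrt 2))
     (PAdd (psum (\<lambda>j. PMul (Phi 1 j) (PMul (PConst (mu j)) (Psi 2 j))) N)
           (psum (\<lambda>j. PMul (Phi 2 j) (PMul (PConst (mu j)) (Psi 3 j))) N))"

definition r_pexpr :: "nat \<Rightarrow> (nat \<Rightarrow> real) \<Rightarrow> pexpr" where
  "r_pexpr N mu = PMul (PConst (sqrt 2))
     (PAdd (psum (\<lambda>j. PMul (Phi 2 j) (PMul (PConst (mu j)) (Psi 1 j))) N)
           (psum (\<lambda>j. PMul (Phi 3 j) (PMul (PConst (mu j)) (Psi 2 j))) N))"

lemma peval_q_pexpr [simp]: "peval (q_pexpr N mu) p s = qt N mu p s"
  and peval_r_pexpr [simp]: "peval (r_pexpr N mu) p s = rt N mu p s"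
  by (simp_all add: q_pexpr_def r_pexpr_def qt_def rt_def)

lemma pvars_in_q_pexpr: "pvars_in N (q_pexpr N mu)"
  and pvars_in_r_pexpr: "pvars_in N (r_pexpr N mu)"
  by (auto simp: q_pexpr_def r_pexpr_def intro!: pvars_in_psum)

definition U_pexpr :: "nat \<Rightarrow> (nat \<Rightarrow> real) \<Rightarrow> (nat \<Rightarrow> real) \<Rightarrow> nat \<Rightarrow> nat \<Rightarrow> nat \<Rightarrow> pexpr" where
  "U_pexpr N lam mu j i k =
     (if i = 1 \<and> k = 1 then PConst (-2 * lam j)
      else if i = 1 \<and> k = 2 then PMul (PConst (sqrt 2)) (q_pexpr N mu)
      else if i = 2 \<and> k = 1 then PMul (PConst (sqrt 2)) (r_pexpr N mu)
      else if i = 2 \<and> k = 3 then PMul (PConst (sqrt 2)) (q_pexpr N mu)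
      else if i = 3 \<and> k = 2 then PMul (PConst (sqrt 2)) (r_pexpr N mu)
      else if i = 3 \<and> k = 3 then PConst (2 * lam j)
      else PConst 0)"

lemma peval_U_pexpr [simp]:
  "peval (U_pexpr N lam mu j i k) p s = Umat (qt N mu p s) (rt N mu p s) (lam j) i k"
  by (simp add: U_pexpr_def Umat_def)

lemma pvars_in_U_pexpr: "pvars_in N (U_pexpr N lam mu j i k)"
  by (simp add: U_pexpr_def pvars_in_q_pexpr pvars_in_r_pexpr)

text \<open>The derivative along the vector field of the nonlinearized system; along a solution every jet
  of \<open>q\<close> and \<open>r\<close> is therefore a polynomial in the phase-space coordinates.  Only coordinates with
  \<open>i \<in> {1..3}\<close> and \<open>j \<in> {1..N}\<close> are governed by \<^const>\<open>solves\<close>, hence \<^const>\<open>pvars_in\<close>.\<close>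
fun lie_deriv :: "nat \<Rightarrow> (nat \<Rightarrow> real) \<Rightarrow> (nat \<Rightarrow> real) \<Rightarrow> pexpr \<Rightarrow> pexpr" where
  "lie_deriv N lam mu (PConst c) = PConst 0"
| "lie_deriv N lam mu (Phi i j) = psum (\<lambda>k. PMul (U_pexpr N lam mu j i k) (Phi k j)) 3"
| "lie_deriv N lam mu (Psi i j) =
     PMul (PConst (-1)) (psum (\<lambda>k. PMul (U_pexpr N lam mu j k i) (Psi k j)) 3)"
| "lie_deriv N lam mu (PAdd e1 e2) = PAdd (lie_deriv N lam mu e1) (lie_deriv N lam mu e2)"
| "lie_deriv N lam mu (PMul e1 e2) =
     PAdd (PMul (lie_deriv N lam mu e1) e2) (PMul e1 (lie_deriv N lam mu e2))"

lemma pvars_in_lie_deriv: "pvars_in N e \<Longrightarrow> pvars_in N (lie_deriv N lam mu e)"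
  by (induct e) (auto simp: pvars_in_U_pexpr intro!: pvars_in_psum)

lemma pvars_in_lie_deriv_funpow: "pvars_in N e \<Longrightarrow> pvars_in N ((lie_deriv N lam mu ^^ k) e)"
  by (induct k) (auto simp: pvars_in_lie_deriv)

lemma peval_has_real_derivative:
  assumes sol: "solves N lam mu I phi psi" and x: "x \<in> I" and "pvars_in N e"
  shows "((\<lambda>t. peval e (phi t) (psi t)) has_real_derivative
           peval (lie_deriv N lam mu e) (phi x) (psi x)) (at x)"
  using \<open>pvars_in N e\<close>
proof (induction e)
  case (Phi i j)
  then show ?case
    using sol x by (simp add: solves_def)
next
  case (Psi i j)
  then show ?case
    using sol x by (simp add: solves_def)
qed (auto intro!: derivative_eq_intros simp: algebra_simps)

lemma higher_deriv_peval:
  assumes I: "open I" and sol: "solves N lam mu I phi psi" and "pvars_in N e" and "x \<in> I"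
  shows "(deriv ^^ k) (\<lambda>t. peval e (phi t) (psi t)) x
    = peval ((lie_deriv N lam mu ^^ k) e) (phi x) (psi x)"
  using assms(3,4)
proof (induction k arbitrary: e x)
  case 0
  then show ?case by simp
next
  case (Suc k)
  have "eventually (\<lambda>t. deriv (\<lambda>t. peval e (phi t) (psi t)) t
      = peval (lie_deriv N lam mu e) (phi t) (psi t)) (nhds x)"
    using eventually_nhds_in_open[OF I \<open>x \<in> I\<close>]
    by eventually_elim
       (use Suc.prems peval_has_real_derivative[OF sol] in \<open>blast intro: DERIV_imp_deriv\<close>)
  then have "(deriv ^^ k) (deriv (\<lambda>t. peval e (phi t) (psi t))) x
      = (deriv ^^ k) (\<lambda>t. peval (lie_deriv N lam mu e) (phi t) (psi t)) x"
    by (rule higher_deriv_cong_ev) simp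
  also have "\<dots> = peval ((lie_deriv N lam mu ^^ k) (lie_deriv N lam mu e)) (phi x) (psi x)"
    using Suc.prems by (intro Suc.IH pvars_in_lie_deriv)
  finally show ?case
    by (simp only: funpow_Suc_right o_apply)
qed

definition q_jet :: "nat \<Rightarrow> (nat \<Rightarrow> real) \<Rightarrow> (nat \<Rightarrow> real) \<Rightarrow> state \<Rightarrow> state \<Rightarrow> nat \<Rightarrow> real" where
  "q_jet N lam mu p s k = peval ((lie_deriv N lam mu ^^ k) (q_pexpr N mu)) p s"

definition r_jet :: "nat \<Rightarrow> (nat \<Rightarrow> real) \<Rightarrow> (nat \<Rightarrow> real) \<Rightarrow> state \<Rightarrow> state \<Rightarrow> nat \<Rightarrow> real" where
  "r_jet N lam mu p s k = peval ((lie_deriv N lam mu ^^ k) (r_pexpr N mu)) p s"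

lemma jet_eq_q_jet:
  assumes "open I" and "solves N lam mu I phi psi" and "x \<in> I"
  shows "jet (\<lambda>t. qt N mu (phi t) (psi t)) x = q_jet N lam mu (phi x) (psi x)"
  using higher_deriv_peval[OF assms(1,2) pvars_in_q_pexpr assms(3)]
  by (simp add: jet_def q_jet_def fun_eq_iff)

lemma jet_eq_r_jet:
  assumes "open I" and "solves N lam mu I phi psi" and "x \<in> I"
  shows "jet (\<lambda>t. rt N mu (phi t) (psi t)) x = r_jet N lam mu (phi x) (psi x)"
  using higher_deriv_peval[OF assms(1,2) pvars_in_r_pexpr assms(3)]
  by (simp add: jet_def r_jet_def fun_eq_iff)

definition state_deval :: "nat \<Rightarrow> (nat \<Rightarrow> real) \<Rightarrow> (nat \<Rightarrow> real) \<Rightarrow> dpoly \<Rightarrow> state \<Rightarrow> state \<Rightarrow> real" where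
  "state_deval N lam mu e p s = deval e (q_jet N lam mu p s) (r_jet N lam mu p s)"

lemma state_deval_has_real_derivative:
  assumes sol: "solves N lam mu I phi psi" and x: "x \<in> I"
  shows "((\<lambda>t. state_deval N lam mu e (phi t) (psi t)) has_real_derivative
           state_deval N lam mu (dD e) (phi x) (psi x)) (at x)"
proof (induction e)
  case (DQ k)
  show ?case
    using peval_has_real_derivative[OF sol x pvars_in_lie_deriv_funpow[OF pvars_in_q_pexpr]]
    by (simp add: state_deval_def q_jet_def)
next
  case (DR k)
  show ?case
    using peval_has_real_derivative[OF sol x pvars_in_lie_deriv_funpow[OF pvars_in_r_pexpr]]
    by (simp add: state_deval_def r_jet_def)
qed (auto intro!: derivative_eq_intros simp: state_deval_def)

lemma zero_curvature_seq_abc: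
  assumes "solves N lam mu I phi psi"
  shows "zero_curvature_seq I (\<lambda>t. qt N mu (phi t) (psi t)) (\<lambda>t. rt N mu (phi t) (psi t))
    (\<lambda>m t. state_deval N lam mu (a_dp m) (phi t) (psi t))
    (\<lambda>m t. state_deval N lam mu (b_dp m) (phi t) (psi t))
    (\<lambda>m t. state_deval N lam mu (c_dp m) (phi t) (psi t))"
  unfolding zero_curvature_seq_def
proof (intro conjI ballI allI)
  fix m t
  assume "t \<in> I"
  note deriv = state_deval_has_real_derivative[OF assms \<open>t \<in> I\<close>]
  have jet0: "q_jet N lam mu p s 0 = qt N mu p s" "r_jet N lam mu p s 0 = rt N mu p s" for p s
    by (simp_all add: q_jet_def r_jet_def)
  show "((\<lambda>t. state_deval N lam mu (a_dp m) (phi t) (psi t)) has_real_derivative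
      qt N mu (phi t) (psi t) * state_deval N lam mu (c_dp m) (phi t) (psi t)
      - rt N mu (phi t) (psi t) * state_deval N lam mu (b_dp m) (phi t) (psi t)) (at t)"
    using deriv[of "a_dp m"] a_dp_deriv_and_at_zero[of m] by (simp add: state_deval_def jet0)
  show "((\<lambda>t. state_deval N lam mu (b_dp m) (phi t) (psi t)) has_real_derivative
      -2 * state_deval N lam mu (b_dp (Suc m)) (phi t) (psi t)
      - 2 * qt N mu (phi t) (psi t) * state_deval N lam mu (a_dp m) (phi t) (psi t)) (at t)"
    using deriv[of "b_dp m"] by (simp add: state_deval_def jet0 b_dp_Suc)
  show "((\<lambda>t. state_deval N lam mu (c_dp m) (phi t) (psi t)) has_real_derivative
      2 * state_deval N lam mu (c_dp (Suc m)) (phi t) (psi t)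
      + 2 * rt N mu (phi t) (psi t) * state_deval N lam mu (a_dp m) (phi t) (psi t)) (at t)"
    using deriv[of "c_dp m"] by (simp add: state_deval_def jet0 c_dp_Suc)
qed (simp_all add: state_deval_def abc_dp_0)

section \<open>The Lax entries\<close>

text \<open>Coefficients of \<open>\<lambda>\<^sup>-\<^sup>m\<close> in the expansions of \<open>A(\<lambda>), B(\<lambda>), C(\<lambda>)\<close> above.\<close>

definition lax_A :: "nat \<Rightarrow> (nat \<Rightarrow> real) \<Rightarrow> (nat \<Rightarrow> real) \<Rightarrow> nat \<Rightarrow> state \<Rightarrow> state \<Rightarrow> real" where
  "lax_A N lam mu m p s = (case m of 0 \<Rightarrow> -1
     | Suc k \<Rightarrow> \<Sum>j=1..N. mu j * lam j ^ k * (p 1 j * s 1 j - p 3 j * s 3 j))"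

definition lax_B :: "nat \<Rightarrow> (nat \<Rightarrow> real) \<Rightarrow> (nat \<Rightarrow> real) \<Rightarrow> nat \<Rightarrow> state \<Rightarrow> state \<Rightarrow> real" where
  "lax_B N lam mu m p s = (case m of 0 \<Rightarrow> 0
     | Suc k \<Rightarrow> sqrt 2 * (\<Sum>j=1..N. mu j * lam j ^ k * (p 1 j * s 2 j + p 2 j * s 3 j)))"

definition lax_C :: "nat \<Rightarrow> (nat \<Rightarrow> real) \<Rightarrow> (nat \<Rightarrow> real) \<Rightarrow> nat \<Rightarrow> state \<Rightarrow> state \<Rightarrow> real" where
  "lax_C N lam mu m p s = (case m of 0 \<Rightarrow> 0
     | Suc k \<Rightarrow> sqrt 2 * (\<Sum>j=1..N. mu j * lam j ^ k * (p 2 j * s 1 j + p 3 j * s 2 j)))"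

lemma lax_B_1: "lax_B N lam mu 1 p s = qt N mu p s"
  and lax_C_1: "lax_C N lam mu 1 p s = rt N mu p s"
  by (simp_all add: lax_B_def lax_C_def qt_def rt_def sum.distrib algebra_simps)

lemma sum_1_3: "(\<Sum>k::nat=1..3. f k) = f 1 + f 2 + (f 3 :: 'a :: comm_monoid_add)"
  by (simp add: numeral_3_eq_3 numeral_2_eq_2)

lemma solves_quadratic_forms_derivs:
  assumes sol: "solves N lam mu I phi psi" and x: "x \<in> I" and j: "j \<in> {1..N}"
  defines "p \<equiv> phi x" and "s \<equiv> psi x"
  defines "q \<equiv> qt N mu p s" and "r \<equiv> rt N mu p s"
  shows "((\<lambda>t. phi t 1 j * psi t 1 j - phi t 3 j * psi t 3 j) has_real_derivative
      sqrt 2 * (q * (p 2 j * s 1 j + p 3 j * s 2 j) - r * (p 1 j * s 2 j + p 2 j * s 3 j))) (at x)"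
    and "((\<lambda>t. phi t 1 j * psi t 2 j + phi t 2 j * psi t 3 j) has_real_derivative
      -2 * lam j * (p 1 j * s 2 j + p 2 j * s 3 j) - sqrt 2 * q * (p 1 j * s 1 j - p 3 j * s 3 j)) (at x)"
    and "((\<lambda>t. phi t 2 j * psi t 1 j + phi t 3 j * psi t 2 j) has_real_derivative
      2 * lam j * (p 2 j * s 1 j + p 3 j * s 2 j) + sqrt 2 * r * (p 1 j * s 1 j - p 3 j * s 3 j)) (at x)"
proof -
  note comp = sol[unfolded solves_def, rule_format, OF x _ j, unfolded sum_1_3 Umat_def,
    folded p_def s_def q_def r_def]
  have P1: "((\<lambda>t. phi t 1 j) has_real_derivative -2 * lam j * p 1 j + sqrt 2 * q * p 2 j) (at x)"
    and P2: "((\<lambda>t. phi t 2 j) has_real_derivative sqrt 2 * r * p 1 j + sqrt 2 * q * p 3 j) (at x)"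
    and P3: "((\<lambda>t. phi t 3 j) has_real_derivative sqrt 2 * r * p 2 j + 2 * lam j * p 3 j) (at x)"
    and Q1: "((\<lambda>t. psi t 1 j) has_real_derivative 2 * lam j * s 1 j - sqrt 2 * r * s 2 j) (at x)"
    and Q2: "((\<lambda>t. psi t 2 j) has_real_derivative - sqrt 2 * q * s 1 j - sqrt 2 * r * s 3 j) (at x)"
    and Q3: "((\<lambda>t. psi t 3 j) has_real_derivative - sqrt 2 * q * s 2 j - 2 * lam j * s 3 j) (at x)"
    using comp[of 1] comp[of 2] comp[of 3] by (simp_all add: q_def r_def)
  show "((\<lambda>t. phi t 1 j * psi t 1 j - phi t 3 j * psi t 3 j) has_real_derivative
      sqrt 2 * (q * (p 2 j * s 1 j + p 3 j * s 2 j) - r * (p 1 j * s 2 j + p 2 j * s 3 j))) (at x)"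
    by (rule DERIV_cong[OF DERIV_diff[OF DERIV_mult[OF P1 Q1] DERIV_mult[OF P3 Q3]]])
       (simp add: p_def s_def algebra_simps)
  show "((\<lambda>t. phi t 1 j * psi t 2 j + phi t 2 j * psi t 3 j) has_real_derivative
      -2 * lam j * (p 1 j * s 2 j + p 2 j * s 3 j) - sqrt 2 * q * (p 1 j * s 1 j - p 3 j * s 3 j)) (at x)"
    by (rule DERIV_cong[OF DERIV_add[OF DERIV_mult[OF P1 Q2] DERIV_mult[OF P2 Q3]]])
       (simp add: p_def s_def algebra_simps)
  show "((\<lambda>t. phi t 2 j * psi t 1 j + phi t 3 j * psi t 2 j) has_real_derivative
      2 * lam j * (p 2 j * s 1 j + p 3 j * s 2 j) + sqrt 2 * r * (p 1 j * s 1 j - p 3 j * s 3 j)) (at x)"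
    by (rule DERIV_cong[OF DERIV_add[OF DERIV_mult[OF P2 Q1] DERIV_mult[OF P3 Q2]]])
       (simp add: p_def s_def algebra_simps)
qed

lemma sqrt2_mult_sqrt2: "sqrt 2 * (sqrt 2 * x) = 2 * (x :: real)"
  by (simp add: mult.assoc[symmetric])

lemma lax_A_has_real_derivative:
  assumes "solves N lam mu I phi psi" and "x \<in> I"
  shows "((\<lambda>t. lax_A N lam mu m (phi t) (psi t)) has_real_derivative
    qt N mu (phi x) (psi x) * lax_C N lam mu m (phi x) (psi x)
    - rt N mu (phi x) (psi x) * lax_B N lam mu m (phi x) (psi x)) (at x)"
proof (cases m)
  case (Suc k)
  let ?q = "qt N mu (phi x) (psi x)" and ?r = "rt N mu (phi x) (psi x)"
  have "((\<lambda>t. \<Sum>j=1..N. mu j * lam j ^ k * (phi t 1 j * psi t 1 j - phi t 3 j * psi t 3 j))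
      has_real_derivative (\<Sum>j=1..N. mu j * lam j ^ k * (sqrt 2 *
        (?q * (phi x 2 j * psi x 1 j + phi x 3 j * psi x 2 j)
         - ?r * (phi x 1 j * psi x 2 j + phi x 2 j * psi x 3 j))))) (at x)"
    by (intro DERIV_cmult DERIV_sum solves_quadratic_forms_derivs[OF assms]) auto
  then show ?thesis
    unfolding Suc lax_A_def lax_B_def lax_C_def nat.case
    by (rule DERIV_cong) (simp add: algebra_simps sum_subtractf sum_distrib_left)
qed (simp add: lax_A_def lax_B_def lax_C_def)

lemma lax_B_has_real_derivative:
  assumes "solves N lam mu I phi psi" and "x \<in> I"
  shows "((\<lambda>t. lax_B N lam mu m (phi t) (psi t)) has_real_derivative
    -2 * lax_B N lam mu (Suc m) (phi x) (psi x)
    - 2 * qt N mu (phi x) (psi x) * lax_A N lam mu m (phi x) (psi x)) (at x)"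
proof (cases m)
  case 0
  then show ?thesis
    using lax_B_1[of N lam mu "phi x" "psi x"] by (simp add: lax_A_def lax_B_def)
next
  case (Suc k)
  have "((\<lambda>t. sqrt 2 * (\<Sum>j=1..N. mu j * lam j ^ k * (phi t 1 j * psi t 2 j + phi t 2 j * psi t 3 j)))
      has_real_derivative sqrt 2 * (\<Sum>j=1..N. mu j * lam j ^ k *
        (-2 * lam j * (phi x 1 j * psi x 2 j + phi x 2 j * psi x 3 j)
         - sqrt 2 * qt N mu (phi x) (psi x) * (phi x 1 j * psi x 1 j - phi x 3 j * psi x 3 j)))) (at x)"
    by (intro DERIV_cmult DERIV_sum solves_quadratic_forms_derivs[OF assms]) auto
  then show ?thesis
    unfolding Suc lax_A_def lax_B_def nat.case
    by (rule DERIV_cong)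
       (simp add: algebra_simps sqrt2_mult_sqrt2 sum_negf sum.distrib sum_subtractf sum_distrib_left)
qed

lemma lax_C_has_real_derivative:
  assumes "solves N lam mu I phi psi" and "x \<in> I"
  shows "((\<lambda>t. lax_C N lam mu m (phi t) (psi t)) has_real_derivative
    2 * lax_C N lam mu (Suc m) (phi x) (psi x)
    + 2 * rt N mu (phi x) (psi x) * lax_A N lam mu m (phi x) (psi x)) (at x)"
proof (cases m)
  case 0
  then show ?thesis
    using lax_C_1[of N lam mu "phi x" "psi x"] by (simp add: lax_A_def lax_C_def)
next
  case (Suc k)
  have "((\<lambda>t. sqrt 2 * (\<Sum>j=1..N. mu j * lam j ^ k * (phi t 2 j * psi t 1 j + phi t 3 j * psi t 2 j)))
      has_real_derivative sqrt 2 * (\<Sum>j=1..N. mu j * lam j ^ k *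
        (2 * lam j * (phi x 2 j * psi x 1 j + phi x 3 j * psi x 2 j)
         + sqrt 2 * rt N mu (phi x) (psi x) * (phi x 1 j * psi x 1 j - phi x 3 j * psi x 3 j)))) (at x)"
    by (intro DERIV_cmult DERIV_sum solves_quadratic_forms_derivs[OF assms]) auto
  then show ?thesis
    unfolding Suc lax_A_def lax_C_def nat.case
    by (rule DERIV_cong)
       (simp add: algebra_simps sqrt2_mult_sqrt2 sum_negf sum.distrib sum_subtractf sum_distrib_left)
qed

lemma zero_curvature_seq_lax:
  assumes "solves N lam mu I phi psi"
  shows "zero_curvature_seq I (\<lambda>t. qt N mu (phi t) (psi t)) (\<lambda>t. rt N mu (phi t) (psi t))
    (\<lambda>m t. lax_A N lam mu m (phi t) (psi t))
    (\<lambda>m t. lax_B N lam mu m (phi t) (psi t))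
    (\<lambda>m t. lax_C N lam mu m (phi t) (psi t))"
  using lax_A_has_real_derivative[OF assms] lax_B_has_real_derivative[OF assms]
    lax_C_has_real_derivative[OF assms]
  by (simp add: zero_curvature_seq_def lax_A_def lax_B_def lax_C_def)

section \<open>The characteristic polynomial and the stationary equation\<close>

definition char_poly :: "nat \<Rightarrow> (nat \<Rightarrow> real) \<Rightarrow> real poly" where
  "char_poly N lam = (\<Prod>j\<in>{1..N}. [:- lam j, 1:])"

lemma degree_char_poly: "degree (char_poly N lam) = N"
  unfolding char_poly_def by (subst degree_prod_eq_sum_degree) auto

lemma coeff_char_poly_top: "coeff (char_poly N lam) N = 1"
  using lead_coeff_prod[of "\<lambda>j. [:- lam j, 1:]" "{1..N}"] degree_char_poly[of N lam]
  by (simp add: char_poly_def)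

lemma char_poly_annihilates_power_sums:
  "(\<Sum>m\<le>N. coeff (char_poly N lam) m * (\<Sum>j=1..N. w j * lam j ^ m)) = 0"
proof -
  have root: "(\<Sum>m\<le>N. coeff (char_poly N lam) m * lam j ^ m) = 0" if "j \<in> {1..N}" for j
  proof -
    have "poly (char_poly N lam) (lam j) = 0"
      unfolding char_poly_def poly_prod using that by (intro prod_zero) auto
    then show ?thesis
      by (simp add: poly_altdef degree_char_poly)
  qed
  have "(\<Sum>m\<le>N. coeff (char_poly N lam) m * (\<Sum>j=1..N. w j * lam j ^ m))
      = (\<Sum>j=1..N. w j * (\<Sum>m\<le>N. coeff (char_poly N lam) m * lam j ^ m))"
    by (simp add: sum_distrib_left mult_ac sum.swap[of _ "{..N}"])
  also have "\<dots> = 0"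
    by (simp add: root)
  finally show ?thesis .
qed

lemma char_poly_annihilates_lax_B:
  "(\<Sum>m\<le>N. coeff (char_poly N lam) m * lax_B N lam mu (Suc m) p s) = 0"
  using char_poly_annihilates_power_sums[of N lam
      "\<lambda>j. sqrt 2 * mu j * (p 1 j * s 2 j + p 2 j * s 3 j)"]
  by (simp add: lax_B_def sum_distrib_left mult_ac)

lemma char_poly_annihilates_lax_C:
  "(\<Sum>m\<le>N. coeff (char_poly N lam) m * lax_C N lam mu (Suc m) p s) = 0"
  using char_poly_annihilates_power_sums[of N lam
      "\<lambda>j. sqrt 2 * mu j * (p 2 j * s 1 j + p 3 j * s 2 j)"]
  by (simp add: lax_C_def sum_distrib_left mult_ac)

lemma sum_convolution_reindex:
  fixes p g v :: "nat \<Rightarrow> 'a :: comm_semiring_1"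
  shows "(\<Sum>m\<le>N. p m * (\<Sum>k\<le>m. g k * v (m - k)))
    = (\<Sum>n\<le>N. (\<Sum>k\<le>N - n. p (n + k) * g k) * v n)"
proof -
  have "(\<Sum>m\<le>N. p m * (\<Sum>k\<le>m. g k * v (m - k)))
      = (\<Sum>(m, k)\<in>Sigma {..N} (\<lambda>m. {..m}). p m * g k * v (m - k))"
    by (simp add: sum.Sigma sum_distrib_left mult.assoc)
  also have "\<dots> = (\<Sum>(n, k)\<in>Sigma {..N} (\<lambda>n. {..N - n}). p (n + k) * g k * v n)"
    by (rule sum.reindex_bij_witness[where i = "\<lambda>(n, k). (n + k, k)" and j = "\<lambda>(m, k). (m - k, k)"])
       auto
  also have "\<dots> = (\<Sum>n\<le>N. (\<Sum>k\<le>N - n. p (n + k) * g k) * v n)"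
    by (simp add: sum.Sigma sum_distrib_right)
  finally show ?thesis .
qed

definition gauge_coeff :: "nat \<Rightarrow> (nat \<Rightarrow> real) \<Rightarrow> (nat \<Rightarrow> real) \<Rightarrow> nat \<Rightarrow> state \<Rightarrow> state \<Rightarrow> real" where
  "gauge_coeff N lam mu k p s =
     quot_coeff (\<lambda>m. state_deval N lam mu (a_dp m) p s) (\<lambda>m. lax_A N lam mu m p s) k"

definition integral_coeff :: "nat \<Rightarrow> (nat \<Rightarrow> real) \<Rightarrow> (nat \<Rightarrow> real) \<Rightarrow> nat \<Rightarrow> state \<Rightarrow> state \<Rightarrow> real" where
  "integral_coeff N lam mu n p s =
     (\<Sum>k\<le>N - n. coeff (char_poly N lam) (n + k) * gauge_coeff N lam mu k p s)"

lemma integral_coeff_top: "integral_coeff N lam mu N p s = 1"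
  by (simp add: integral_coeff_def gauge_coeff_def coeff_char_poly_top)

lemma
  assumes "open I" and sol: "solves N lam mu I phi psi" and "x \<in> I"
  shows gauge_coeff_conserved:
      "((\<lambda>t. gauge_coeff N lam mu k (phi t) (psi t)) has_real_derivative 0) (at x)"
    and lax_B_convolution: "lax_B N lam mu m (phi x) (psi x) = (\<Sum>k\<le>m.
      gauge_coeff N lam mu k (phi x) (psi x) * state_deval N lam mu (b_dp (m - k)) (phi x) (psi x))"
    and lax_C_convolution: "lax_C N lam mu m (phi x) (psi x) = (\<Sum>k\<le>m.
      gauge_coeff N lam mu k (phi x) (psi x) * state_deval N lam mu (c_dp (m - k)) (phi x) (psi x))"
  using zero_curvature_seq_quotient[OF assms(1) zero_curvature_seq_abc[OF sol]
      zero_curvature_seq_lax[OF sol] assms(3)]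
  by (simp_all add: gauge_coeff_def)

lemma integral_of_motionI:
  assumes "\<And>I phi psi x. open I \<Longrightarrow> solves N lam mu I phi psi \<Longrightarrow> x \<in> I
      \<Longrightarrow> ((\<lambda>t. F (phi t) (psi t)) has_real_derivative 0) (at x)"
  shows "integral_of_motion N lam mu F"
  unfolding integral_of_motion_def
proof (intro allI impI ballI)
  fix I phi psi x y
  assume "open I \<and> is_interval I \<and> solves N lam mu I phi psi" and "x \<in> I" "y \<in> I"
  then obtain c where "\<forall>z\<in>I. F (phi z) (psi z) = c"
    using has_field_derivative_zero_constant[of I "\<lambda>t. F (phi t) (psi t)"] assms
    by (meson has_field_derivative_at_within is_interval_convex)
  with \<open>x \<in> I\<close> \<open>y \<in> I\<close> show "F (phi x) (psi x) = F (phi y) (psi y)"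
    by simp
qed

lemma integral_of_motion_integral_coeff: "integral_of_motion N lam mu (integral_coeff N lam mu n)"
proof (rule integral_of_motionI)
  fix I phi psi x
  assume "open I" "solves N lam mu I phi psi" "x \<in> I"
  then show "((\<lambda>t. integral_coeff N lam mu n (phi t) (psi t)) has_real_derivative 0) (at x)"
    unfolding integral_coeff_def
    using DERIV_sum[OF DERIV_cmult[OF gauge_coeff_conserved]] by fastforce
qed

lemma stationary_equation_along_solution:
  assumes "open I" and sol: "solves N lam mu I phi psi" and "x \<in> I"
  defines "q \<equiv> jet (\<lambda>t. qt N mu (phi t) (psi t)) x" and "r \<equiv> jet (\<lambda>t. rt N mu (phi t) (psi t)) x"
  shows "(\<Sum>n\<le>N. integral_coeff N lam mu n (phi x) (psi x) * K1 n q r) = 0"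
    and "(\<Sum>n\<le>N. integral_coeff N lam mu n (phi x) (psi x) * K2 n q r) = 0"
proof -
  let ?p = "coeff (char_poly N lam)" and ?G = "\<lambda>k. gauge_coeff N lam mu k (phi x) (psi x)"
  let ?b = "\<lambda>n. state_deval N lam mu (b_dp n) (phi x) (psi x)"
    and ?c = "\<lambda>n. state_deval N lam mu (c_dp n) (phi x) (psi x)"
  have K: "K1 n q r = -2 * ?b (Suc n)" "K2 n q r = 2 * ?c (Suc n)" for n
    unfolding q_def r_def jet_eq_q_jet[OF assms(1-3)] jet_eq_r_jet[OF assms(1-3)]
    by (simp_all add: K1_def K2_def state_deval_def)
  have bc0: "?b 0 = 0" "?c 0 = 0"
    by (simp_all add: state_deval_def abc_dp_0)
  have "(\<Sum>n\<le>N. integral_coeff N lam mu n (phi x) (psi x) * ?b (Suc n))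
      = (\<Sum>m\<le>N. ?p m * (\<Sum>k\<le>m. ?G k * ?b (Suc (m - k))))"
    by (simp only: sum_convolution_reindex[of ?p ?G "\<lambda>n. ?b (Suc n)"] integral_coeff_def)
  also have "\<dots> = (\<Sum>m\<le>N. ?p m * lax_B N lam mu (Suc m) (phi x) (psi x))"
    by (simp add: lax_B_convolution[OF assms(1-3)] bc0 Suc_diff_le)
  also have "\<dots> = 0"
    by (rule char_poly_annihilates_lax_B)
  finally have "(\<Sum>n\<le>N. integral_coeff N lam mu n (phi x) (psi x) * ?b (Suc n)) = 0" .
  moreover have "(\<Sum>n\<le>N. integral_coeff N lam mu n (phi x) (psi x) * K1 n q r)
      = -2 * (\<Sum>n\<le>N. integral_coeff N lam mu n (phi x) (psi x) * ?b (Suc n))"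
    by (simp add: K sum_distrib_left algebra_simps)
  ultimately show "(\<Sum>n\<le>N. integral_coeff N lam mu n (phi x) (psi x) * K1 n q r) = 0"
    by simp
  have "(\<Sum>n\<le>N. integral_coeff N lam mu n (phi x) (psi x) * ?c (Suc n))
      = (\<Sum>m\<le>N. ?p m * (\<Sum>k\<le>m. ?G k * ?c (Suc (m - k))))"
    by (simp only: sum_convolution_reindex[of ?p ?G "\<lambda>n. ?c (Suc n)"] integral_coeff_def)
  also have "\<dots> = (\<Sum>m\<le>N. ?p m * lax_C N lam mu (Suc m) (phi x) (psi x))"
    by (simp add: lax_C_convolution[OF assms(1-3)] bc0 Suc_diff_le)
  also have "\<dots> = 0"
    by (rule char_poly_annihilates_lax_C)
  finally have "(\<Sum>n\<le>N. integral_coeff N lam mu n (phi x) (psi x) * ?c (Suc n)) = 0" .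
  moreover have "(\<Sum>n\<le>N. integral_coeff N lam mu n (phi x) (psi x) * K2 n q r)
      = 2 * (\<Sum>n\<le>N. integral_coeff N lam mu n (phi x) (psi x) * ?c (Suc n))"
    by (simp add: K sum_distrib_left algebra_simps)
  ultimately show "(\<Sum>n\<le>N. integral_coeff N lam mu n (phi x) (psi x) * K2 n q r) = 0"
    by simp
qed

theorem theorem4p2:
  fixes N :: nat and lam mu :: "nat \<Rightarrow> real"
  assumes "N \<ge> 1"
    and "inj_on lam {1..N}"
    and "\<forall>j\<in>{1..N}. mu j \<noteq> 0"
  shows "\<exists>\<alpha> :: nat \<Rightarrow> state \<Rightarrow> state \<Rightarrow> real.
           (\<forall>k<N. integral_of_motion N lam mu (\<alpha> k))
         \<and> (\<forall>I phi psi. open I \<and> is_interval I \<and> solves N lam mu I phi psi \<longrightarrow>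
              (\<forall>x\<in>I.
                 K1 N (jet (\<lambda>t. qt N mu (phi t) (psi t)) x) (jet (\<lambda>t. rt N mu (phi t) (psi t)) x)
                 + (\<Sum>k<N. \<alpha> k (phi x) (psi x) *
                     K1 k (jet (\<lambda>t. qt N mu (phi t) (psi t)) x) (jet (\<lambda>t. rt N mu (phi t) (psi t)) x)) = 0
               \<and> K2 N (jet (\<lambda>t. qt N mu (phi t) (psi t)) x) (jet (\<lambda>t. rt N mu (phi t) (psi t)) x)
                 + (\<Sum>k<N. \<alpha> k (phi x) (psi x) *
                     K2 k (jet (\<lambda>t. qt N mu (phi t) (psi t)) x) (jet (\<lambda>t. rt N mu (phi t) (psi t)) x)) = 0))"
proof (intro exI conjI allI impI ballI)
  show "integral_of_motion N lam mu (integral_coeff N lam mu k)" for k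
    by (rule integral_of_motion_integral_coeff)
  fix I phi psi x
  assume "open I \<and> is_interval I \<and> solves N lam mu I phi psi" and "x \<in> I"
  then have "open I" "solves N lam mu I phi psi" "x \<in> I"
    by auto
  note stationary = stationary_equation_along_solution[OF this]
  show "K1 N (jet (\<lambda>t. qt N mu (phi t) (psi t)) x) (jet (\<lambda>t. rt N mu (phi t) (psi t)) x)
      + (\<Sum>k<N. integral_coeff N lam mu k (phi x) (psi x) *
          K1 k (jet (\<lambda>t. qt N mu (phi t) (psi t)) x) (jet (\<lambda>t. rt N mu (phi t) (psi t)) x)) = 0"
    using stationary(1) by (simp add: integral_coeff_top flip: lessThan_Suc_atMost)
  show "K2 N (jet (\<lambda>t. qt N mu (phi t) (psi t)) x) (jet (\<lambda>t. rt N mu (phi t) (psi t)) x)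
      + (\<Sum>k<N. integral_coeff N lam mu k (phi x) (psi x) *
          K2 k (jet (\<lambda>t. qt N mu (phi t) (psi t)) x) (jet (\<lambda>t. rt N mu (phi t) (psi t)) x)) = 0"
    using stationary(2) by (simp add: integral_coeff_top flip: lessThan_Suc_atMost)
qed

end
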